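(* Let $\mathbf{Z}=\{\mathbf{z}_i\}_{i=1}^n$ be a $G$-networked sample and $\xi$ a function on $\mathcal{Z}$ with mean $\mu$, variance $\sigma^2$, and $|\xi(\mathbf{z})-\mu|\le M$ for $\rho$-almost all $\mathbf{z}$. If $\mathbf{w}$ is an optimal weighting of $G$ and $\mathsf{s}=\mathsf{s}(G)$, then for all $\epsilon>0$, $$\Pr\Big(\sum_{i=1}^n w_i(\xi(\mathbf{z}_i)-\mu)\ge\epsilon\Big)\le\exp\Big(-\frac{\epsilon^2}{2(\mathsf{s}\sigma^2+\frac13 M\epsilon)}\Big).$$
   Context: Networked setting: $G$ is a $k$-partite hypergraph with hyperedges $e_1,\dots,e_n$; vertex set partitioned into $V^{(1)},\dots,V^{(k)}$, each hyperedge containing exactly one vertex $e^{(j)}$ of each $V^{(j)}$. $\mathcal{X}=\mathcal{X}^{(1)}\times\cdots\times\mathcal{X}^{(k)}$ (compact metric spaces), $\mathcal{Y}=\mathbb{R}$, $\mathcal{Z}=\mathcal{X}\times\mathcal{Y}$. Each vertex $v\in V^{(j)}$ gets a feature $\phi(v)$ drawn independently from $\rho_j$, independently of the hypergraph. Hyperedge $e_i$ yields $\mathbf{z}_i=(\mathbf{x}_i,y_i)$, $\mathbf{x}_i=(\phi(e_i^{(1)}),\dots,\phi(e_i^{(k)}))$, labels conditionally independent given the features with $y_i\sim\rho_{y|\mathbf{x}}(\cdot\mid\mathbf{x}_i)$; $\rho=\rho_{y|\mathbf{x}}\rho_{\mathbf{x}}$ with $\rho_{\mathbf{x}}=\prod_j\rho_j$,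 and mean/variance of $\xi$ are with respect to $\rho$. A feasible weighting is $\mathbf{w}$ with $w_i\ge0$ and $\sum_{i:\,v\in e_i}w_i\le1$ for every vertex $v$; $\mathsf{s}(G)=\max\sum_i w_i$ over feasible weightings, attained by an optimal weighting. *)

theory Defs
  imports "HOL-Probability.Probability"
begin

text \<open>A k-partite hypergraph with hyperedges indexed by i < n: the vertex of part j
  (j < k) in hyperedge i is the vertex (j, e i j).  Vertices are pairs (part, label).\<close>

definition hg_vertices :: "nat \<Rightarrow> nat \<Rightarrow> (nat \<Rightarrow> nat \<Rightarrow> 'v) \<Rightarrow> (nat \<times> 'v) set" where
  "hg_vertices k n e = {(j, e i j) | i j. i < n \<and> j < k}"

definition feasible_weighting :: "nat \<Rightarrow> nat \<Rightarrow> (nat \<Rightarrow> nat \<Rightarrow> 'v) \<Rightarrow> (nat \<Rightarrow> real) \<Rightarrow> bool" where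
  "feasible_weighting k n e w \<longleftrightarrow>
     (\<forall>i<n. 0 \<le> w i) \<and> (\<forall>j<k. \<forall>a. (\<Sum>i | i < n \<and> e i j = a. w i) \<le> 1)"

definition s_value :: "nat \<Rightarrow> nat \<Rightarrow> (nat \<Rightarrow> nat \<Rightarrow> 'v) \<Rightarrow> real" where
  "s_value k n e = Sup {(\<Sum>i<n. w i) | w. feasible_weighting k n e w}"

definition optimal_weighting :: "nat \<Rightarrow> nat \<Rightarrow> (nat \<Rightarrow> nat \<Rightarrow> 'v) \<Rightarrow> (nat \<Rightarrow> real) \<Rightarrow> bool" where
  "optimal_weighting k n e w \<longleftrightarrow>
     feasible_weighting k n e w \<and> (\<Sum>i<n. w i) = s_value k n e"

definition edge_feat :: "nat \<Rightarrow> (nat \<Rightarrow> nat \<Rightarrow> 'v) \<Rightarrow> (nat \<times> 'v \<Rightarrow> 'x) \<Rightarrow> nat \<Rightarrow> (nat \<Rightarrow> 'x)" where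
  "edge_feat k e \<phi> i = (\<lambda>j\<in>{..<k}. \<phi> (j, e i j))"

text \<open>The distribution rho on Z = X \<times> R: x ~ product of rho_j, then y ~ K x.\<close>

definition data_dist :: "nat \<Rightarrow> (nat \<Rightarrow> 'x measure) \<Rightarrow> ((nat \<Rightarrow> 'x) \<Rightarrow> real measure)
    \<Rightarrow> ((nat \<Rightarrow> 'x) \<times> real) measure" where
  "data_dist k \<rho> K =
     (PiM {..<k} \<rho>) \<bind> (\<lambda>x. distr (K x) (PiM {..<k} \<rho> \<Otimes>\<^sub>M borel) (\<lambda>y. (x, y)))"

definition networked_sample :: "nat \<Rightarrow> nat \<Rightarrow> (nat \<Rightarrow> nat \<Rightarrow> 'v) \<Rightarrow> (nat \<Rightarrow> 'x measure)
    \<Rightarrow> ((nat \<Rightarrow> 'x) \<Rightarrow> real measure) \<Rightarrow> ((nat \<times> 'v \<Rightarrow> 'x) \<times> (nat \<Rightarrow> real)) measure" where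
  "networked_sample k n e \<rho> K =
     (let FM = PiM (hg_vertices k n e) (\<lambda>v. \<rho> (fst v))
      in FM \<bind> (\<lambda>\<phi>. distr (PiM {..<n} (\<lambda>i. K (edge_feat k e \<phi> i)))
                          (FM \<Otimes>\<^sub>M PiM {..<n} (\<lambda>_. borel)) (\<lambda>ys. (\<phi>, ys))))"

end

theory Submission
  imports Defs
begin

text \<open>Condition on the vertex features. Given them, the labels are independent, so the moment
  generating function of the weighted sum factorises into conditional mgfs, each of the form
  g(x_i) powr w_i by Jensen's inequality (w_i \<le> 1), where g is the conditional mgf of one
  sample given its features x_i. The x_i are functions of independent vertex features, and the
  weights through every vertex sum to at most 1, so Finner's generalisation of Hoelder's
  inequality bounds the expectation of this product by (E g) powr s, with s the total weight.
  Bernstein's bound on the mgf of a bounded centred variable and the choice of t in the Chernoff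
  bound then give the claim.\<close>

section \<open>Hoelder-type inequalities\<close>

lemma prod_powr_le_weighted_sum:
  fixes t w :: "'l \<Rightarrow> real"
  assumes A: "finite A" and t: "\<And>l. l \<in> A \<Longrightarrow> 0 < t l" and w: "\<And>l. l \<in> A \<Longrightarrow> 0 \<le> w l"
    and W: "(\<Sum>l\<in>A. w l) \<le> 1"
  shows "(\<Prod>l\<in>A. t l powr w l) \<le> (\<Sum>l\<in>A. w l * t l) + (1 - (\<Sum>l\<in>A. w l))"
proof -
  \<comment> \<open>Jensen for exp with an extra point 0 (i.e. the value 1) carrying the slack weight\<close>
  define u where "u j = (case j of None \<Rightarrow> 1 - (\<Sum>l\<in>A. w l) | Some l \<Rightarrow> w l)" for j
  define y where "y j = (case j of None \<Rightarrow> 0 | Some l \<Rightarrow> ln (t l))" for j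
  have sum_B: "(\<Sum>j\<in>insert None (Some ` A). g j) = g None + (\<Sum>l\<in>A. g (Some l))" for g :: "'l option \<Rightarrow> real"
    using A by (simp add: sum.reindex)
  have "exp (\<Sum>j\<in>insert None (Some ` A). u j *\<^sub>R y j) \<le> (\<Sum>j\<in>insert None (Some ` A). u j * exp (y j))"
    using A w W by (intro convex_on_sum[OF _ _ exp_convex]) (auto simp: sum_B u_def)
  moreover have "(\<Prod>l\<in>A. t l powr w l) = exp (\<Sum>l\<in>A. w l * ln (t l))"
    using A t by (simp add: exp_sum powr_def less_imp_neq[symmetric] cong: prod.cong)
  ultimately show ?thesis
    using t by (simp add: sum_B u_def y_def)
qed

lemma prod_powr_bounds:
  fixes f w :: "'l \<Rightarrow> real"
  assumes "\<And>l. l \<in> A \<Longrightarrow> a \<le> f l \<and> f l \<le> b" and "0 \<le> a" and "\<And>l. l \<in> A \<Longrightarrow> 0 \<le> w l"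
  shows "0 \<le> (\<Prod>l\<in>A. f l powr w l) \<and> (\<Prod>l\<in>A. f l powr w l) \<le> (\<Prod>l\<in>A. b powr w l)"
proof -
  have "0 \<le> f l" "f l \<le> b" "0 \<le> w l" if "l \<in> A" for l
    using assms(1)[OF that] assms(2) assms(3)[OF that] by auto
  then show ?thesis
    by (auto intro!: prod_nonneg prod_mono powr_mono2)
qed

lemma (in finite_measure) integrable_real_bounded:
  fixes f :: "'a \<Rightarrow> real"
  assumes "f \<in> borel_measurable M" and "AE x in M. a \<le> f x \<and> f x \<le> b"
  shows "integrable M f"
proof (rule integrable_const_bound[where B="max \<bar>a\<bar> \<bar>b\<bar>"])
  show "AE x in M. norm (f x) \<le> max \<bar>a\<bar> \<bar>b\<bar>"
    using assms(2) by eventually_elim auto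
qed (fact assms(1))

lemma integral_prod_powr_le:
  fixes h :: "'l \<Rightarrow> 'a \<Rightarrow> real"
  assumes N: "prob_space N" and A: "finite A"
    and h_meas: "\<And>l. l \<in> A \<Longrightarrow> h l \<in> borel_measurable N"
    and h_bound: "\<And>l y. l \<in> A \<Longrightarrow> y \<in> space N \<Longrightarrow> a \<le> h l y \<and> h l y \<le> b" and a: "0 < a"
    and w: "\<And>l. l \<in> A \<Longrightarrow> 0 \<le> w l" and W: "(\<Sum>l\<in>A. w l) \<le> 1"
  shows "(\<integral>y. (\<Prod>l\<in>A. h l y powr w l) \<partial>N) \<le> (\<Prod>l\<in>A. (\<integral>y. h l y \<partial>N) powr w l)"
proof -
  interpret prob_space N by fact
  define m where "m l = (\<integral>y. h l y \<partial>N)" for l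
  have h_int: "integrable N (h l)" if "l \<in> A" for l
    using h_bound[OF that] by (intro integrable_real_bounded h_meas that AE_I2) auto
  have m: "a \<le> m l" if "l \<in> A" for l
    unfolding m_def using h_bound[OF that] by (intro integral_ge_const h_int that AE_I2) auto
  define P where "P = (\<Prod>l\<in>A. m l powr w l)"
  \<comment> \<open>weighted AM-GM applied to the normalised values h l y / m l\<close>
  have pointwise: "(\<Prod>l\<in>A. h l y powr w l) \<le> P * ((\<Sum>l\<in>A. w l * (h l y / m l)) + (1 - (\<Sum>l\<in>A. w l)))"
    if y: "y \<in> space N" for y
  proof -
    have "(\<Prod>l\<in>A. h l y powr w l) = (\<Prod>l\<in>A. m l powr w l * (h l y / m l) powr w l)"
      using m a by (intro prod.cong refl) (auto simp: powr_divide dest!: m)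
    also have "\<dots> = P * (\<Prod>l\<in>A. (h l y / m l) powr w l)"
      by (simp add: P_def prod.distrib)
    also have "\<dots> \<le> P * ((\<Sum>l\<in>A. w l * (h l y / m l)) + (1 - (\<Sum>l\<in>A. w l)))"
      using A w W h_bound[OF _ y] m a
      by (intro mult_left_mono prod_powr_le_weighted_sum)
         (auto simp: P_def intro!: divide_pos_pos prod_nonneg, (meson less_le_trans)+)
    finally show ?thesis .
  qed
  have "integrable N (\<lambda>y. \<Prod>l\<in>A. h l y powr w l)"
    using h_bound a w
    by (intro integrable_real_bounded[where a=0 and b="\<Prod>l\<in>A. b powr w l"] AE_I2
          prod_powr_bounds borel_measurable_prod powr_real_measurable h_meas) auto
  then have "(\<integral>y. (\<Prod>l\<in>A. h l y powr w l) \<partial>N)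
      \<le> (\<integral>y. P * ((\<Sum>l\<in>A. w l * (h l y / m l)) + (1 - (\<Sum>l\<in>A. w l))) \<partial>N)"
    using h_int pointwise by (intro integral_mono) auto
  also have "\<dots> = P * ((\<Sum>l\<in>A. w l * (m l / m l)) + (1 - (\<Sum>l\<in>A. w l)))"
    using h_int by (simp add: integral_sum m_def prob_space) (intro disjI2 sum.cong, auto)
  also have "\<dots> = P"
  proof -
    have "(\<Sum>l\<in>A. w l * (m l / m l)) = (\<Sum>l\<in>A. w l)"
      using m a by (intro sum.cong) (auto dest: m)
    then show ?thesis by simp
  qed
  finally show ?thesis by (simp add: P_def m_def)
qed

lemma integral_prod_powr_le_with_constants:
  fixes h :: "'l \<Rightarrow> 'a \<Rightarrow> real"
  assumes N: "prob_space N" and E: "finite E" and "A \<subseteq> E"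
    and h_meas: "\<And>l. l \<in> A \<Longrightarrow> h l \<in> borel_measurable N"
    and h_bound: "\<And>l y. l \<in> A \<Longrightarrow> y \<in> space N \<Longrightarrow> a \<le> h l y \<and> h l y \<le> b" and a: "0 < a"
    and h_const: "\<And>l y y'. l \<in> E - A \<Longrightarrow> y \<in> space N \<Longrightarrow> y' \<in> space N \<Longrightarrow> h l y = h l y'"
    and w: "\<And>l. l \<in> E \<Longrightarrow> 0 \<le> w l" and W: "(\<Sum>l\<in>A. w l) \<le> 1"
  shows "(\<integral>y. (\<Prod>l\<in>E. h l y powr w l) \<partial>N) \<le> (\<Prod>l\<in>E. (\<integral>y. h l y \<partial>N) powr w l)"
proof -
  interpret prob_space N by fact
  obtain y0 where y0: "y0 \<in> space N"
    using not_empty by blast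
  define C where "C = (\<Prod>l\<in>E - A. h l y0 powr w l)"
  have split: "(\<Prod>l\<in>E. f l) = (\<Prod>l\<in>E - A. f l) * (\<Prod>l\<in>A. f l)" for f :: "'l \<Rightarrow> real"
    using \<open>A \<subseteq> E\<close> E by (rule prod.subset_diff)
  have "(\<Prod>l\<in>E. h l y powr w l) = C * (\<Prod>l\<in>A. h l y powr w l)" if y: "y \<in> space N" for y
  proof -
    have "(\<Prod>l\<in>E - A. h l y powr w l) = C"
      unfolding C_def using h_const[OF _ y y0] by (intro prod.cong) auto
    then show ?thesis by (simp add: split)
  qed
  then have "(\<integral>y. (\<Prod>l\<in>E. h l y powr w l) \<partial>N) = (\<integral>y. C * (\<Prod>l\<in>A. h l y powr w l) \<partial>N)"
    by (intro Bochner_Integration.integral_cong) auto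
  also have "\<dots> = C * (\<integral>y. (\<Prod>l\<in>A. h l y powr w l) \<partial>N)"
    by simp
  also have "\<dots> \<le> C * (\<Prod>l\<in>A. (\<integral>y. h l y \<partial>N) powr w l)"
    using E \<open>A \<subseteq> E\<close> h_meas h_bound a w W
    by (intro mult_left_mono integral_prod_powr_le[OF N]) (auto simp: C_def prod_nonneg finite_subset)
  also have "C = (\<Prod>l\<in>E - A. (\<integral>y. h l y \<partial>N) powr w l)"
  proof -
    have "(\<integral>y. h l y \<partial>N) = h l y0" if "l \<in> E - A" for l
    proof -
      have "(\<integral>y. h l y \<partial>N) = (\<integral>y. h l y0 \<partial>N)"
        using h_const[OF that _ y0] by (intro Bochner_Integration.integral_cong) auto
      then show ?thesis by (simp add: prob_space)
    qed
    then show ?thesis unfolding C_def by (intro prod.cong) auto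
  qed
  finally show ?thesis by (simp add: split)
qed

lemma integral_powr_le_powr_integral:
  fixes f :: "'a \<Rightarrow> real"
  assumes N: "prob_space N" and f_meas: "f \<in> borel_measurable N"
    and f_bound: "AE y in N. a \<le> f y \<and> f y \<le> b" and a: "0 < a" and w: "0 \<le> w" "w \<le> 1"
  shows "(\<integral>y. f y powr w \<partial>N) \<le> (\<integral>y. f y \<partial>N) powr w"
proof -
  interpret prob_space N by fact
  have "AE y in N. a \<le> b"
    using f_bound by eventually_elim auto
  then have "a \<le> b" by simp
  \<comment> \<open>clamping f to [a, b] changes it only on a null set\<close>
  define h where "h y = max a (min b (f y))" for y
  have h_meas: "h \<in> borel_measurable N"
    unfolding h_def using f_meas by measurable
  have h_bound: "a \<le> h y \<and> h y \<le> b" for y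
    using \<open>a \<le> b\<close> by (auto simp: h_def)
  have "AE y in N. f y = h y"
    using f_bound by eventually_elim (auto simp: h_def)
  then have "(\<integral>y. f y powr w \<partial>N) = (\<integral>y. h y powr w \<partial>N)" "(\<integral>y. f y \<partial>N) = (\<integral>y. h y \<partial>N)"
    using f_meas h_meas by (auto intro!: integral_cong_AE)
  moreover have "(\<integral>y. (\<Prod>l\<in>{()}. h y powr w) \<partial>N) \<le> (\<Prod>l\<in>{()}. (\<integral>y. h y \<partial>N) powr w)"
    using h_meas h_bound a w by (intro integral_prod_powr_le[OF N, where a=a and b=b]) auto
  ultimately show ?thesis by simp
qed

section \<open>Finner's inequality on finite product spaces\<close>

lemma product_prob_space_padded:
  assumes "\<And>i. i \<in> I \<Longrightarrow> prob_space (M i)"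
  shows "product_prob_space (\<lambda>i. if i \<in> I then M i else count_space {undefined})"
proof -
  have "prob_space (if i \<in> I then M i else count_space {undefined})" for i
    using assms by (auto intro: prob_spaceI)
  then show ?thesis
    by (simp add: product_prob_space_def product_sigma_finite_def prob_space_imp_sigma_finite
                  product_prob_space_axioms_def)
qed

lemma nn_integral_PiM_prod:
  fixes f :: "'i \<Rightarrow> 'a \<Rightarrow> ennreal"
  assumes I: "finite I" and M: "\<And>i. i \<in> I \<Longrightarrow> prob_space (M i)"
    and f: "\<And>i. i \<in> I \<Longrightarrow> f i \<in> borel_measurable (M i)"
  shows "(\<integral>\<^sup>+x. (\<Prod>i\<in>I. f i (x i)) \<partial>PiM I M) = (\<Prod>i\<in>I. \<integral>\<^sup>+x. f i x \<partial>M i)"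
proof -
  let ?M = "\<lambda>i. if i \<in> I then M i else count_space {undefined}"
  interpret product_prob_space ?M I
    using product_prob_space_padded[OF M] .
  have "PiM I M = PiM I ?M"
    by (intro PiM_cong) auto
  moreover have "(\<integral>\<^sup>+x. (\<Prod>i\<in>I. f i (x i)) \<partial>PiM I ?M) = (\<Prod>i\<in>I. \<integral>\<^sup>+x. f i x \<partial>?M i)"
    using f by (intro product_nn_integral_prod I) auto
  ultimately show ?thesis
    by (simp cong: prod.cong)
qed

lemma integral_PiM_insert:
  fixes g :: "('i \<Rightarrow> 'a) \<Rightarrow> real"
  assumes J: "finite J" "v \<notin> J" and M: "\<And>i. i \<in> insert v J \<Longrightarrow> prob_space (M i)"
    and g: "integrable (PiM (insert v J) M) g"
  shows "(\<integral>x. g x \<partial>PiM (insert v J) M) = (\<integral>x. (\<integral>y. g (x(v := y)) \<partial>M v) \<partial>PiM J M)"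
proof -
  let ?M = "\<lambda>i. if i \<in> insert v J then M i else count_space {undefined}"
  interpret product_prob_space ?M "insert v J"
    using product_prob_space_padded[OF M] .
  have eq: "PiM K ?M = PiM K M" if "K \<subseteq> insert v J" for K
    using that by (intro PiM_cong) auto
  have "integrable (PiM (insert v J) ?M) g"
    using g by (simp only: eq[OF order_refl])
  from product_integral_insert[OF J this] show ?thesis
    by (simp only: eq[OF order_refl] eq[OF subset_insertI] if_True insertI1)
qed

context
  fixes M :: "'i \<Rightarrow> 'a measure" and v :: 'i and J :: "'i set"
  assumes J: "finite J" "v \<notin> J" and prob_M: "\<And>i. i \<in> insert v J \<Longrightarrow> prob_space (M i)"
begin

lemma fun_upd_in_space_PiM:
  "x \<in> space (PiM J M) \<Longrightarrow> y \<in> space (M v) \<Longrightarrow> x(v := y) \<in> space (PiM (insert v J) M)"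
  using J by (auto simp: space_PiM PiE_def extensional_def Pi_iff)

lemma measurable_fun_upd_section:
  fixes g :: "('i \<Rightarrow> 'a) \<Rightarrow> real"
  assumes "g \<in> borel_measurable (PiM (insert v J) M)" and "x \<in> space (PiM J M)"
  shows "(\<lambda>y. g (x(v := y))) \<in> borel_measurable (M v)"
  using measurable_comp[OF measurable_component_update[OF assms(2) J(2)] assms(1)] by (simp add: comp_def)

lemma measurable_partial_integral:
  fixes g :: "('i \<Rightarrow> 'a) \<Rightarrow> real"
  assumes "g \<in> borel_measurable (PiM (insert v J) M)"
  shows "(\<lambda>x. \<integral>y. g (x(v := y)) \<partial>M v) \<in> borel_measurable (PiM J M)"
proof -
  interpret Mv: prob_space "M v"
    using prob_M by simp
  have "(\<lambda>(x, y). g (x(v := y))) \<in> borel_measurable (PiM J M \<Otimes>\<^sub>M M v)"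
    using measurable_comp[OF measurable_add_dim assms] by (simp add: comp_def case_prod_beta')
  then show ?thesis
    by (rule Mv.borel_measurable_lebesgue_integral)
qed

lemma partial_integral_bounds:
  fixes g :: "('i \<Rightarrow> 'a) \<Rightarrow> real" and a b :: real
  assumes "g \<in> borel_measurable (PiM (insert v J) M)"
    and "\<And>x. x \<in> space (PiM (insert v J) M) \<Longrightarrow> a \<le> g x \<and> g x \<le> b" and "x \<in> space (PiM J M)"
  shows "a \<le> (\<integral>y. g (x(v := y)) \<partial>M v) \<and> (\<integral>y. g (x(v := y)) \<partial>M v) \<le> b"
proof -
  interpret prob_space "M v"
    using prob_M by simp
  show ?thesis
    using assms(2)[OF fun_upd_in_space_PiM[OF assms(3)]]
    by (intro conjI integral_ge_const integral_le_const AE_I2 integrable_real_bounded[where a=a and b=b]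
          measurable_fun_upd_section[OF assms(1,3)]) auto
qed

lemma partial_integral_fun_upd:
  fixes g :: "('i \<Rightarrow> 'a) \<Rightarrow> real"
  assumes "u \<in> J" and g_upd: "\<And>x z. x \<in> space (PiM (insert v J) M) \<Longrightarrow> z \<in> space (M u) \<Longrightarrow> g (x(u := z)) = g x"
    and x: "x \<in> space (PiM J M)" and z: "z \<in> space (M u)"
  shows "(\<integral>y. g ((x(u := z))(v := y)) \<partial>M v) = (\<integral>y. g (x(v := y)) \<partial>M v)"
proof (rule Bochner_Integration.integral_cong[OF refl])
  fix y assume y: "y \<in> space (M v)"
  have "(x(u := z))(v := y) = (x(v := y))(u := z)"
    using \<open>u \<in> J\<close> J(2) by (auto simp: fun_upd_twist)
  then show "g ((x(u := z))(v := y)) = g (x(v := y))"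
    using g_upd[OF fun_upd_in_space_PiM[OF x y] z] by (simp only:)
qed

lemma integral_PiM_insert_bounded:
  fixes g :: "('i \<Rightarrow> 'a) \<Rightarrow> real" and a b :: real
  assumes "g \<in> borel_measurable (PiM (insert v J) M)"
    and "\<And>x. x \<in> space (PiM (insert v J) M) \<Longrightarrow> a \<le> g x \<and> g x \<le> b"
  shows "(\<integral>x. g x \<partial>PiM (insert v J) M) = (\<integral>x. (\<integral>y. g (x(v := y)) \<partial>M v) \<partial>PiM J M)"
proof -
  interpret prob_space "PiM (insert v J) M"
    using prob_M by (intro prob_space_PiM) auto
  show ?thesis
    using assms J prob_M by (intro integral_PiM_insert integrable_real_bounded[where a=a and b=b] AE_I2) auto
qed

lemma Finner_step:
  fixes f :: "'l \<Rightarrow> ('i \<Rightarrow> 'a) \<Rightarrow> real"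
  assumes E: "finite E" and f_meas: "\<And>l. l \<in> E \<Longrightarrow> f l \<in> borel_measurable (PiM (insert v J) M)"
    and f_bound: "\<And>l x. l \<in> E \<Longrightarrow> x \<in> space (PiM (insert v J) M) \<Longrightarrow> a \<le> f l x \<and> f l x \<le> b"
    and a: "0 < a" and w: "\<And>l. l \<in> E \<Longrightarrow> 0 \<le> w l"
    and f_upd: "\<And>l x z. l \<in> E \<Longrightarrow> v \<notin> S l \<Longrightarrow> x \<in> space (PiM (insert v J) M) \<Longrightarrow> z \<in> space (M v) \<Longrightarrow>
                 f l (x(v := z)) = f l x"
    and W: "(\<Sum>l\<in>{l\<in>E. v \<in> S l}. w l) \<le> 1"
  shows "(\<integral>x. (\<Prod>l\<in>E. f l x powr w l) \<partial>PiM (insert v J) M)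
    \<le> (\<integral>x. (\<Prod>l\<in>E. (\<integral>y. f l (x(v := y)) \<partial>M v) powr w l) \<partial>PiM J M)"
proof -
  interpret prob_space "PiM J M"
    using prob_M by (intro prob_space_PiM) auto
  have "(\<integral>x. (\<Prod>l\<in>E. f l x powr w l) \<partial>PiM (insert v J) M)
      = (\<integral>x. (\<integral>y. (\<Prod>l\<in>E. f l (x(v := y)) powr w l) \<partial>M v) \<partial>PiM J M)"
    using f_meas f_bound a w
    by (intro integral_PiM_insert_bounded[where a=0 and b="\<Prod>l\<in>E. b powr w l"]
          borel_measurable_prod powr_real_measurable prod_powr_bounds) auto
  also have "\<dots> \<le> (\<integral>x. (\<Prod>l\<in>E. (\<integral>y. f l (x(v := y)) \<partial>M v) powr w l) \<partial>PiM J M)"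
  proof (rule integral_mono')
    show "integrable (PiM J M) (\<lambda>x. \<Prod>l\<in>E. (\<integral>y. f l (x(v := y)) \<partial>M v) powr w l)"
      using f_meas f_bound a w
      by (intro integrable_real_bounded[where a=0 and b="\<Prod>l\<in>E. b powr w l"] AE_I2 prod_powr_bounds
            borel_measurable_prod powr_real_measurable measurable_partial_integral partial_integral_bounds) auto
    fix x assume x: "x \<in> space (PiM J M)"
    show "0 \<le> (\<Prod>l\<in>E. (\<integral>y. f l (x(v := y)) \<partial>M v) powr w l)"
      by (auto intro: prod_nonneg)
    \<comment> \<open>only the factors depending on v vary with y, and their weights sum to at most one\<close>
    show "(\<integral>y. (\<Prod>l\<in>E. f l (x(v := y)) powr w l) \<partial>M v)
        \<le> (\<Prod>l\<in>E. (\<integral>y. f l (x(v := y)) \<partial>M v) powr w l)"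
    proof (rule integral_prod_powr_le_with_constants[OF prob_M[OF insertI1] E,
          where A="{l\<in>E. v \<in> S l}"])
      show "f l (x(v := y)) = f l (x(v := y'))"
        if "l \<in> E - {l\<in>E. v \<in> S l}" "y \<in> space (M v)" "y' \<in> space (M v)" for l y y'
        using f_upd[of l "x(v := y')" y] that fun_upd_in_space_PiM[OF x] by (simp only: fun_upd_upd) auto
    qed (use f_bound fun_upd_in_space_PiM[OF x] measurable_fun_upd_section[OF f_meas x] a w W in auto)
  qed
  finally show ?thesis .
qed

end

lemma Finner_ineq:
  fixes M :: "'i \<Rightarrow> 'a measure" and f :: "'l \<Rightarrow> ('i \<Rightarrow> 'a) \<Rightarrow> real" and S :: "'l \<Rightarrow> 'i set"
  assumes I: "finite I" and M: "\<And>i. i \<in> I \<Longrightarrow> prob_space (M i)" and E: "finite E"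
    and f_meas: "\<And>l. l \<in> E \<Longrightarrow> f l \<in> borel_measurable (PiM I M)"
    and f_bound: "\<And>l x. l \<in> E \<Longrightarrow> x \<in> space (PiM I M) \<Longrightarrow> a \<le> f l x \<and> f l x \<le> b"
    and a: "0 < a" and w: "\<And>l. l \<in> E \<Longrightarrow> 0 \<le> w l"
    and f_upd: "\<And>l x u z. l \<in> E \<Longrightarrow> x \<in> space (PiM I M) \<Longrightarrow> u \<in> I \<Longrightarrow> u \<notin> S l \<Longrightarrow>
                  z \<in> space (M u) \<Longrightarrow> f l (x(u := z)) = f l x"
    and W: "\<And>u. u \<in> I \<Longrightarrow> (\<Sum>l\<in>{l\<in>E. u \<in> S l}. w l) \<le> 1"
  shows "(\<integral>x. (\<Prod>l\<in>E. f l x powr w l) \<partial>PiM I M) \<le> (\<Prod>l\<in>E. (\<integral>x. f l x \<partial>PiM I M) powr w l)"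
  using I M f_meas f_bound f_upd W
proof (induction I arbitrary: f rule: finite_induct)
  case empty
  show ?case by (simp add: PiM_empty lebesgue_integral_count_space_finite)
next
  case (insert v J)
  define f' where "f' l x = (\<integral>y. f l (x(v := y)) \<partial>M v)" for l x
  have f'_meas: "f' l \<in> borel_measurable (PiM J M)" if "l \<in> E" for l
    unfolding f'_def using insert.hyps insert.prems(1,2) that by (intro measurable_partial_integral) auto
  have f'_bound: "a \<le> f' l x \<and> f' l x \<le> b" if "l \<in> E" "x \<in> space (PiM J M)" for l x
    unfolding f'_def using insert.hyps insert.prems(1-3) that by (intro partial_integral_bounds) auto
  have "(\<integral>x. (\<Prod>l\<in>E. f l x powr w l) \<partial>PiM (insert v J) M) \<le> (\<integral>x. (\<Prod>l\<in>E. f' l x powr w l) \<partial>PiM J M)"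
    unfolding f'_def
  proof (rule Finner_step[where S=S and a=a and b=b])
    show "f l (x(v := z)) = f l x"
      if "l \<in> E" "v \<notin> S l" "x \<in> space (PiM (insert v J) M)" "z \<in> space (M v)" for l x z
      using insert.prems(4)[OF that(1,3) insertI1 that(2,4)] .
  qed (use insert.hyps insert.prems E a w in auto)
  also have "\<dots> \<le> (\<Prod>l\<in>E. (\<integral>x. f' l x \<partial>PiM J M) powr w l)"
  proof (rule insert.IH)
    show "f' l (x(u := z)) = f' l x"
      if "l \<in> E" "x \<in> space (PiM J M)" "u \<in> J" "u \<notin> S l" "z \<in> space (M u)" for l x u z
      unfolding f'_def
    proof (rule partial_integral_fun_upd[where g="f l"])
      show "f l (x'(u := z')) = f l x'"
        if "x' \<in> space (PiM (insert v J) M)" "z' \<in> space (M u)" for x' z'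
        using insert.prems(4)[OF \<open>l \<in> E\<close> that(1) insertI2[OF \<open>u \<in> J\<close>] \<open>u \<notin> S l\<close> that(2)] .
    qed (use insert.hyps insert.prems(1) that in auto)
  qed (use insert.prems(1,5) f'_meas f'_bound in auto)
  also have "\<dots> = (\<Prod>l\<in>E. (\<integral>x. f l x \<partial>PiM (insert v J) M) powr w l)"
    unfolding f'_def using insert.hyps insert.prems(1-3)
    by (intro prod.cong refl arg_cong2[where f="(powr)"] integral_PiM_insert_bounded[symmetric]) auto
  finally show ?case .
qed

section \<open>Bernstein's bound on the moment generating function\<close>

lemma fact_ge_2_mult_3_pow: "2 * 3 ^ n \<le> (fact (n + 2) :: real)"
proof (induction n)
  case (Suc n)
  have "3 * (2 * 3 ^ n) \<le> real (n + 3) * fact (n + 2)"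
    using Suc by (intro mult_mono) auto
  then show ?case
    by (simp add: algebra_simps)
qed simp

lemma exp_le_Bernstein:
  fixes x c :: real
  assumes x: "\<bar>x\<bar> \<le> c" and c: "c < 3"
  shows "exp x \<le> 1 + x + x\<^sup>2 / (2 * (1 - c / 3))"
proof -
  have q: "norm (c / 3) < 1"
    using x c by simp
  \<comment> \<open>the Taylor tail x^(n+2)/(n+2)! is dominated by the geometric series x^2/2 (c/3)^n\<close>
  have term_le: "inverse (fact (n + 2)) * x ^ (n + 2) \<le> x\<^sup>2 / 2 * (c / 3) ^ n" for n
  proof -
    have "x ^ (n + 2) \<le> \<bar>x\<bar> ^ (n + 2)"
      by (metis abs_ge_self power_abs)
    then have "inverse (fact (n + 2)) * x ^ (n + 2) \<le> \<bar>x\<bar> ^ (n + 2) / fact (n + 2)"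
      by (simp add: divide_inverse mult.commute)
    also have "\<dots> = x\<^sup>2 * \<bar>x\<bar> ^ n / fact (n + 2)"
      by (simp add: power_add power2_abs mult.commute power2_eq_square)
    also have "\<dots> \<le> x\<^sup>2 * c ^ n / (2 * 3 ^ n)"
      using fact_ge_2_mult_3_pow[of n] x by (intro frac_le mult_left_mono power_mono) auto
    also have "\<dots> = x\<^sup>2 / 2 * (c / 3) ^ n"
      by (simp add: power_divide)
    finally show ?thesis .
  qed
  have "(\<Sum>n. inverse (fact (n + 2)) * x ^ (n + 2)) \<le> (\<Sum>n. x\<^sup>2 / 2 * (c / 3) ^ n)"
    using summable_ignore_initial_segment[OF summable_exp[of x], of 2] term_le
      summable_mult[OF summable_geometric[OF q]]
    by (intro suminf_le) auto
  also have "\<dots> = x\<^sup>2 / 2 * (\<Sum>n. (c / 3) ^ n)"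
    by (rule suminf_mult[OF summable_geometric[OF q]])
  also have "\<dots> = x\<^sup>2 / (2 * (1 - c / 3))"
    by (simp only: suminf_geometric[OF q]) simp
  finally show ?thesis
    using exp_first_two_terms[of x] by simp
qed

lemma exp_mult_bounds:
  fixes t u c :: real
  assumes "0 \<le> t" and "\<bar>u\<bar> \<le> c"
  shows "exp (- (t * c)) \<le> exp (t * u) \<and> exp (t * u) \<le> exp (t * c)"
proof -
  have "\<bar>t * u\<bar> \<le> t * c"
    using assms by (simp add: abs_mult mult_left_mono)
  then show ?thesis by (simp add: abs_le_iff)
qed

lemma exp_mult_le_Bernstein:
  fixes t u c :: real
  assumes "0 \<le> t" and "\<bar>u\<bar> \<le> c" and "t * c < 3"
  shows "exp (t * u) \<le> 1 + t * u + t\<^sup>2 / (2 * (1 - t * c / 3)) * u\<^sup>2"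
proof -
  have "\<bar>t * u\<bar> \<le> t * c"
    using assms by (simp add: abs_mult mult_left_mono)
  then show ?thesis
    using exp_le_Bernstein[of "t * u" "t * c"] assms(3) by (simp add: power_mult_distrib)
qed

lemma (in prob_space) AE_abs_le_nonneg:
  fixes f :: "'a \<Rightarrow> real"
  assumes "AE x in M. \<bar>f x\<bar> \<le> c"
  shows "0 \<le> c"
proof -
  have "AE x in M. 0 \<le> c"
    using assms by eventually_elim auto
  then show ?thesis by simp
qed

lemma (in prob_space) Bernstein_mgf_le:
  fixes f :: "'a \<Rightarrow> real"
  assumes f_meas: "f \<in> borel_measurable M" and f_bound: "AE x in M. \<bar>f x - \<mu>\<bar> \<le> c"
    and \<mu>: "\<mu> = expectation f" and t: "0 \<le> t" "t * c < 3"
  shows "expectation (\<lambda>x. exp (t * (f x - \<mu>)))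
    \<le> 1 + t\<^sup>2 * expectation (\<lambda>x. (f x - \<mu>)\<^sup>2) / (2 * (1 - t * c / 3))"
proof -
  define X where "X x = f x - \<mu>" for x
  have X_meas: "X \<in> borel_measurable M"
    unfolding X_def using f_meas by measurable
  have X_bound: "AE x in M. \<bar>X x\<bar> \<le> c"
    using f_bound by (simp add: X_def)
  define B where "B x = 1 + t * X x + t\<^sup>2 / (2 * (1 - t * c / 3)) * (X x)\<^sup>2" for x
  have exp_le_B: "AE x in M. exp (t * X x) \<le> B x"
    using X_bound unfolding B_def by eventually_elim (rule exp_mult_le_Bernstein[OF t(1) _ t(2)])
  have "AE x in M. -c \<le> X x \<and> X x \<le> c"
    using X_bound by eventually_elim auto
  then have X_int: "integrable M X"
    using X_meas by (rule integrable_real_bounded[rotated])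
  then have "integrable M (\<lambda>x. X x + \<mu>)"
    by (intro Bochner_Integration.integrable_add integrable_const)
  then have "integrable M f"
    by (simp add: X_def)
  then have "expectation X = 0"
    unfolding X_def using \<mu> by (simp add: prob_space)
  have "AE x in M. 0 \<le> (X x)\<^sup>2 \<and> (X x)\<^sup>2 \<le> c\<^sup>2"
    using X_bound by eventually_elim (auto simp: abs_le_square_iff[symmetric])
  then have X2_int: "integrable M (\<lambda>x. (X x)\<^sup>2)"
    using X_meas by (intro integrable_real_bounded[where a=0 and b="c\<^sup>2"]) auto
  have "expectation (\<lambda>x. exp (t * X x)) \<le> expectation B"
  proof (rule integral_mono_AE[OF _ _ exp_le_B])
    show "integrable M (\<lambda>x. exp (t * X x))"
      using X_bound X_meas t
      by (intro integrable_real_bounded[where a=0 and b="exp (t * c)"])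
         (auto elim!: eventually_mono simp: mult_left_mono)
  qed (use X_int X2_int in \<open>simp add: B_def\<close>)
  also have "expectation B = 1 + t\<^sup>2 * expectation (\<lambda>x. (X x)\<^sup>2) / (2 * (1 - t * c / 3))"
    unfolding B_def using X_int X2_int \<open>expectation X = 0\<close> by (simp add: prob_space)
  finally show ?thesis
    by (simp add: X_def)
qed

lemma (in prob_space) nn_integral_exp_mult_le_powr:
  fixes Y :: "'a \<Rightarrow> real"
  assumes Y_meas: "Y \<in> borel_measurable M" and Y_bound: "AE y in M. \<bar>Y y\<bar> \<le> c"
    and t: "0 \<le> t" and v: "0 \<le> v" "v \<le> 1"
  shows "(\<integral>\<^sup>+y. ennreal (exp (t * v * Y y)) \<partial>M) \<le> ennreal ((\<integral>y. exp (t * Y y) \<partial>M) powr v)"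
proof -
  have exp_bound: "AE y in M. exp (- (u * c)) \<le> exp (u * Y y) \<and> exp (u * Y y) \<le> exp (u * c)"
    if "0 \<le> u" for u
    using Y_bound by eventually_elim (rule exp_mult_bounds[OF that])
  have "integrable M (\<lambda>y. exp (t * v * Y y))"
    using exp_bound[of "t * v"] t v Y_meas by (intro integrable_real_bounded) auto
  then have "(\<integral>\<^sup>+y. ennreal (exp (t * v * Y y)) \<partial>M) = ennreal (\<integral>y. exp (t * Y y) powr v \<partial>M)"
    by (subst nn_integral_eq_integral) (auto simp: powr_def mult_ac)
  also have "\<dots> \<le> ennreal ((\<integral>y. exp (t * Y y) \<partial>M) powr v)"
    using exp_bound[of t] t v Y_meas
    by (intro ennreal_leI integral_powr_le_powr_integral[OF prob_space_axioms]) auto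
  finally show ?thesis .
qed

section \<open>The networked sampling model\<close>

lemma measurable_PiM_kernel:
  fixes F :: "'i \<Rightarrow> 'b \<Rightarrow> 'a measure"
  assumes I: "finite I" and F: "\<And>i. i \<in> I \<Longrightarrow> F i \<in> L \<rightarrow>\<^sub>M prob_algebra (N i)"
  shows "(\<lambda>x. PiM I (\<lambda>i. F i x)) \<in> L \<rightarrow>\<^sub>M prob_algebra (PiM I N)"
proof -
  have F_space: "prob_space (F i a) \<and> sets (F i a) = sets (N i)" if "a \<in> space L" "i \<in> I" for a i
    using measurable_space[OF F[OF that(2)] that(1)] by (auto simp: space_prob_algebra)
  show ?thesis
  proof (rule measurable_prob_algebra_generated[OF sets_PiM Int_stable_prod_algebra
        prod_algebra_sets_into_space])
    fix a assume "a \<in> space L"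
    then show "prob_space (PiM I (\<lambda>i. F i a))" and "sets (PiM I (\<lambda>i. F i a)) = sets (PiM I N)"
      using F_space by (auto intro!: prob_space_PiM sets_PiM_cong)
  next
    fix A assume "A \<in> prod_algebra I N"
    then obtain J E where A: "A = prod_emb I N J (\<Pi>\<^sub>E j\<in>J. E j)" and J: "finite J" "J \<subseteq> I"
      and E: "\<And>i. i \<in> J \<Longrightarrow> E i \<in> sets (N i)"
      by (rule prod_algebraE) blast
    have "emeasure (PiM I (\<lambda>i. F i a)) A = (\<Prod>j\<in>J. emeasure (F j a) (E j))" if a: "a \<in> space L" for a
    proof -
      have "space (F i a) = space (N i)" if "i \<in> I" for i
        using F_space[OF a that] by (intro sets_eq_imp_space_eq) auto
      then have "A = prod_emb I (\<lambda>i. F i a) J (\<Pi>\<^sub>E j\<in>J. E j)"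
        unfolding A prod_emb_def by (auto simp: PiE_def Pi_iff)
      also have "emeasure (PiM I (\<lambda>i. F i a)) \<dots> = (\<Prod>j\<in>J. emeasure (F j a) (E j))"
        using F_space[OF a] J E by (intro emeasure_PiM_emb) auto
      finally show ?thesis .
    qed
    moreover have "(\<lambda>a. \<Prod>j\<in>J. emeasure (F j a) (E j)) \<in> borel_measurable L"
      using J E F
      by (intro borel_measurable_prod_ennreal measurable_compose[OF measurable_prob_algebraD
            measurable_emeasure_subprob_algebra]) auto
    ultimately show "(\<lambda>a. emeasure (PiM I (\<lambda>i. F i a)) A) \<in> borel_measurable L"
      by (subst measurable_cong) auto
  qed
qed

locale networked_model =
  fixes k n :: nat and e :: "nat \<Rightarrow> nat \<Rightarrow> 'v"
    and \<rho> :: "nat \<Rightarrow> 'x measure" and K :: "(nat \<Rightarrow> 'x) \<Rightarrow> real measure"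
  assumes prob_space_\<rho>: "\<And>j. j < k \<Longrightarrow> prob_space (\<rho> j)"
    and K_kernel: "K \<in> PiM {..<k} \<rho> \<rightarrow>\<^sub>M prob_algebra borel"
begin

abbreviation "PX \<equiv> PiM {..<k} \<rho>"
abbreviation "V \<equiv> hg_vertices k n e"
abbreviation "\<Phi> \<equiv> PiM V (\<lambda>v. \<rho> (fst v))"
abbreviation "feat \<phi> i \<equiv> edge_feat k e \<phi> i"
abbreviation "D \<equiv> data_dist k \<rho> K"
abbreviation "Y \<equiv> PiM {..<n} (\<lambda>_. borel :: real measure)"
abbreviation "NS \<equiv> networked_sample k n e \<rho> K"

lemma prob_space_PX: "prob_space PX"
  using prob_space_\<rho> by (intro prob_space_PiM) auto

lemma K_space: "x \<in> space PX \<Longrightarrow> prob_space (K x) \<and> sets (K x) = sets borel"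
  using measurable_space[OF K_kernel] by (auto simp: space_prob_algebra)

lemma vertex_in_V: "i < n \<Longrightarrow> j < k \<Longrightarrow> (j, e i j) \<in> V"
  unfolding hg_vertices_def by auto

lemma finite_V: "finite V"
proof (rule finite_subset)
  show "V \<subseteq> (\<lambda>(i, j). (j, e i j)) ` ({..<n} \<times> {..<k})"
    unfolding hg_vertices_def by auto
qed auto

lemma fst_V: "v \<in> V \<Longrightarrow> fst v < k"
  unfolding hg_vertices_def by auto

lemma prob_space_\<Phi>: "prob_space \<Phi>"
  using prob_space_\<rho> fst_V by (intro prob_space_PiM) auto

lemma measurable_feat: "i < n \<Longrightarrow> (\<lambda>\<phi>. feat \<phi> i) \<in> \<Phi> \<rightarrow>\<^sub>M PX"
  unfolding edge_feat_def
proof (rule measurable_restrict)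
  fix j assume "i < n" "j \<in> {..<k}"
  then show "(\<lambda>\<phi>. \<phi> (j, e i j)) \<in> \<Phi> \<rightarrow>\<^sub>M \<rho> j"
    using measurable_component_singleton[OF vertex_in_V, of i j "\<lambda>v. \<rho> (fst v)"] by simp
qed

lemma distr_feat:
  assumes "i < n"
  shows "distr \<Phi> PX (\<lambda>\<phi>. feat \<phi> i) = PX"
proof -
  have "distr \<Phi> (\<Pi>\<^sub>M j\<in>{..<k}. \<rho> (fst (j, e i j))) (\<lambda>\<phi>. \<lambda>j\<in>{..<k}. \<phi> (j, e i j))
      = (\<Pi>\<^sub>M j\<in>{..<k}. \<rho> (fst (j, e i j)))"
    using prob_space_\<rho> fst_V vertex_in_V[OF assms] by (intro distr_PiM_reindex) (auto simp: inj_on_def)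
  then show ?thesis
    unfolding edge_feat_def by simp
qed

lemma AE_feat:
  assumes "AE x in PX. P x"
  shows "AE \<phi> in \<Phi>. \<forall>i<n. P (feat \<phi> i)"
proof -
  have "AE \<phi> in \<Phi>. P (feat \<phi> i)" if "i < n" for i
  proof (rule AE_distrD[OF measurable_feat[OF that]])
    show "AE x in distr \<Phi> PX (\<lambda>\<phi>. feat \<phi> i). P x"
      using assms by (simp only: distr_feat[OF that])
  qed
  then have "AE \<phi> in \<Phi>. \<forall>i\<in>{..<n}. P (feat \<phi> i)"
    by (intro AE_finite_allI) auto
  then show ?thesis
    by eventually_elim auto
qed

lemma feat_upd: "u \<notin> {(j, e i j) | j. j < k} \<Longrightarrow> feat (\<phi>(u := z)) i = feat \<phi> i"
  unfolding edge_feat_def by (auto simp: restrict_def fun_eq_iff)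

lemma measurable_pair_kernel:
  "(\<lambda>x. distr (K x) (PX \<Otimes>\<^sub>M borel) (Pair x)) \<in> PX \<rightarrow>\<^sub>M prob_algebra (PX \<Otimes>\<^sub>M borel)"
  by (rule measurable_distr_prob_space2[OF K_kernel]) simp

lemma prob_space_data_dist: "prob_space D"
  unfolding data_dist_def using prob_space_PX measurable_pair_kernel
  by (intro prob_space_bind'[of PX PX]) (auto simp: space_prob_algebra)

lemma sets_data_dist: "sets D = sets (PX \<Otimes>\<^sub>M borel)"
  unfolding data_dist_def using prob_space_PX measurable_pair_kernel
  by (intro sets_bind'[of PX PX]) (auto simp: space_prob_algebra)

lemma measurable_Pair_K: "x \<in> space PX \<Longrightarrow> Pair x \<in> K x \<rightarrow>\<^sub>M PX \<Otimes>\<^sub>M borel"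
  using measurable_Pair1'[of x PX borel] K_space by (simp cong: measurable_cong_sets)

lemma nn_integral_data_dist:
  assumes "f \<in> borel_measurable (PX \<Otimes>\<^sub>M borel)"
  shows "(\<integral>\<^sup>+z. f z \<partial>D) = (\<integral>\<^sup>+x. \<integral>\<^sup>+y. f (x, y) \<partial>K x \<partial>PX)"
  unfolding data_dist_def using assms
  by (simp add: nn_integral_bind[OF _ measurable_prob_algebraD[OF measurable_pair_kernel]]
                nn_integral_distr[OF measurable_Pair_K] cong: nn_integral_cong)

lemma AE_data_dist:
  assumes "Measurable.pred (PX \<Otimes>\<^sub>M borel) P" and "AE z in D. P z"
  shows "AE x in PX. AE y in K x. P (x, y)"
proof -
  have "AE x in PX. AE z in distr (K x) (PX \<Otimes>\<^sub>M borel) (Pair x). P z"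
    using assms unfolding data_dist_def
    by (subst (asm) AE_bind[OF measurable_prob_algebraD[OF measurable_pair_kernel]])
  then show ?thesis
    using AE_space by eventually_elim (auto dest: AE_distrD[OF measurable_Pair_K])
qed

lemma measurable_label_kernel: "(\<lambda>\<phi>. PiM {..<n} (\<lambda>i. K (feat \<phi> i))) \<in> \<Phi> \<rightarrow>\<^sub>M prob_algebra Y"
  using measurable_compose[OF measurable_feat K_kernel]
  by (intro measurable_PiM_kernel[where F="\<lambda>i \<phi>. K (feat \<phi> i)", simplified]) auto

lemma measurable_sample_kernel:
  "(\<lambda>\<phi>. distr (PiM {..<n} (\<lambda>i. K (feat \<phi> i))) (\<Phi> \<Otimes>\<^sub>M Y) (Pair \<phi>)) \<in> \<Phi> \<rightarrow>\<^sub>M prob_algebra (\<Phi> \<Otimes>\<^sub>M Y)"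
  by (rule measurable_distr_prob_space2[OF measurable_label_kernel]) simp

lemma networked_sample_bind:
  "NS = \<Phi> \<bind> (\<lambda>\<phi>. distr (PiM {..<n} (\<lambda>i. K (feat \<phi> i))) (\<Phi> \<Otimes>\<^sub>M Y) (Pair \<phi>))"
  unfolding networked_sample_def by (simp add: Let_def)

lemma prob_space_networked_sample: "prob_space NS"
  unfolding networked_sample_bind using prob_space_\<Phi> measurable_sample_kernel
  by (intro prob_space_bind'[of \<Phi> \<Phi>]) (auto simp: space_prob_algebra)

lemma sets_networked_sample: "sets NS = sets (\<Phi> \<Otimes>\<^sub>M Y)"
  unfolding networked_sample_bind using prob_space_\<Phi> measurable_sample_kernel
  by (intro sets_bind'[of \<Phi> \<Phi>]) (auto simp: space_prob_algebra)

lemma nn_integral_networked_sample_prod: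
  fixes f :: "nat \<Rightarrow> (nat \<Rightarrow> 'x) \<times> real \<Rightarrow> ennreal"
  assumes f_meas: "\<And>i. i < n \<Longrightarrow> f i \<in> borel_measurable (PX \<Otimes>\<^sub>M borel)"
  shows "(\<integral>\<^sup>+\<omega>. (\<Prod>i<n. f i (feat (fst \<omega>) i, snd \<omega> i)) \<partial>NS)
       = (\<integral>\<^sup>+\<phi>. (\<Prod>i<n. \<integral>\<^sup>+y. f i (feat \<phi> i, y) \<partial>K (feat \<phi> i)) \<partial>\<Phi>)"
proof -
  have component: "(\<lambda>ys. ys i) \<in> Y \<rightarrow>\<^sub>M borel" if "i < n" for i
    using that by (intro measurable_component_singleton) auto
  have meas: "(\<lambda>\<omega>. \<Prod>i<n. f i (feat (fst \<omega>) i, snd \<omega> i)) \<in> borel_measurable (\<Phi> \<Otimes>\<^sub>M Y)"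
    using f_meas measurable_feat component by measurable
  have "(\<integral>\<^sup>+ys. (\<Prod>i<n. f i (feat \<phi> i, ys i)) \<partial>PiM {..<n} (\<lambda>i. K (feat \<phi> i)))
      = (\<Prod>i<n. \<integral>\<^sup>+y. f i (feat \<phi> i, y) \<partial>K (feat \<phi> i))" if \<phi>: "\<phi> \<in> space \<Phi>" for \<phi>
  proof (rule nn_integral_PiM_prod)
    fix i assume "i \<in> {..<n}"
    then have x: "feat \<phi> i \<in> space PX"
      using measurable_space[OF measurable_feat \<phi>] by simp
    show "prob_space (K (feat \<phi> i))"
      using K_space[OF x] by simp
    show "(\<lambda>y. f i (feat \<phi> i, y)) \<in> borel_measurable (K (feat \<phi> i))"
      using measurable_compose[OF measurable_Pair_K[OF x] f_meas] \<open>i \<in> {..<n}\<close> by simp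
  qed simp
  moreover have "Pair \<phi> \<in> PiM {..<n} (\<lambda>i. K (feat \<phi> i)) \<rightarrow>\<^sub>M \<Phi> \<Otimes>\<^sub>M Y" if "\<phi> \<in> space \<Phi>" for \<phi>
    using measurable_Pair1'[OF that, of Y] measurable_space[OF measurable_label_kernel that]
    by (simp add: space_prob_algebra cong: measurable_cong_sets)
  ultimately show ?thesis
    unfolding networked_sample_bind using meas
    by (simp add: nn_integral_bind[OF _ measurable_prob_algebraD[OF measurable_sample_kernel]]
                  nn_integral_distr cong: nn_integral_cong)
qed

lemma integral_prod_powr_feat_le:
  assumes g_meas: "g \<in> borel_measurable PX" and g_bound: "\<And>x. a \<le> g x \<and> g x \<le> b" and a: "0 < a"
    and w: "feasible_weighting k n e w"
  shows "(\<integral>\<phi>. (\<Prod>i<n. g (feat \<phi> i) powr w i) \<partial>\<Phi>) \<le> (\<integral>x. g x \<partial>PX) powr (\<Sum>i<n. w i)"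
proof -
  let ?S = "\<lambda>i. {(j, e i j) | j. j < k}"
  have "(\<integral>\<phi>. (\<Prod>i<n. g (feat \<phi> i) powr w i) \<partial>\<Phi>) \<le> (\<Prod>i<n. (\<integral>\<phi>. g (feat \<phi> i) \<partial>\<Phi>) powr w i)"
  proof (rule Finner_ineq[where S="?S" and a=a and b=b])
    show "(\<Sum>i\<in>{i\<in>{..<n}. u \<in> ?S i}. w i) \<le> 1" if "u \<in> V" for u
    proof -
      have "{i\<in>{..<n}. u \<in> ?S i} = {i. i < n \<and> e i (fst u) = snd u}"
        using fst_V[OF that] by (auto simp: prod_eq_iff)
      then show ?thesis
        using w fst_V[OF that] unfolding feasible_weighting_def by auto
    qed
    show "g (feat (\<phi>(u := z)) i) = g (feat \<phi> i)" if "u \<notin> ?S i" for \<phi> u z i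
      using feat_upd[OF that, of \<phi> z] by (rule arg_cong)
  qed (use finite_V prob_space_\<rho> fst_V measurable_compose[OF measurable_feat g_meas] g_bound a w
       in \<open>auto simp: feasible_weighting_def\<close>)
  also have "\<dots> = (\<Prod>i<n. (\<integral>x. g x \<partial>PX) powr w i)"
    using integral_distr[OF measurable_feat g_meas] distr_feat by (intro prod.cong) auto
  also have "\<dots> = (\<integral>x. g x \<partial>PX) powr (\<Sum>i<n. w i)"
  proof -
    interpret prob_space PX by (fact prob_space_PX)
    have "a \<le> (\<integral>x. g x \<partial>PX)"
      using g_bound g_meas by (intro integral_ge_const integrable_real_bounded[where a=a and b=b]) auto
    then show ?thesis
      using a by (simp add: powr_sum)
  qed
  finally show ?thesis .
qed

end

section \<open>Moment generating function of a networked sample\<close>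

definition cond_mgf :: "('a \<Rightarrow> real measure) \<Rightarrow> ('a \<times> real \<Rightarrow> real) \<Rightarrow> real \<Rightarrow> 'a \<Rightarrow> real" where
  "cond_mgf K X t x = (\<integral>y. exp (t * X (x, y)) \<partial>K x)"

context networked_model
begin

context
  fixes X :: "(nat \<Rightarrow> 'x) \<times> real \<Rightarrow> real" and c t :: real
  assumes X_meas: "X \<in> borel_measurable (PX \<Otimes>\<^sub>M borel)"
    and X_bound: "AE z in D. \<bar>X z\<bar> \<le> c" and t: "0 \<le> t"
begin

lemma measurable_X_section: "x \<in> space PX \<Longrightarrow> (\<lambda>y. X (x, y)) \<in> borel_measurable (K x)"
  using measurable_compose[OF measurable_Pair_K X_meas] by (simp add: comp_def)

lemma AE_X_section_bound: "AE x in PX. AE y in K x. \<bar>X (x, y)\<bar> \<le> c"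
  using X_meas X_bound by (intro AE_data_dist) auto

lemma measurable_cond_mgf: "cond_mgf K X t \<in> borel_measurable PX"
proof -
  have "(\<lambda>x. \<integral>\<^sup>+y. ennreal (exp (t * X (x, y))) \<partial>K x) \<in> borel_measurable PX"
    using X_meas
    by (intro nn_integral_measurable_subprob_algebra2[OF _ measurable_prob_algebraD[OF K_kernel]])
       (simp add: case_prod_beta)
  then have "(\<lambda>x. enn2real (\<integral>\<^sup>+y. ennreal (exp (t * X (x, y))) \<partial>K x)) \<in> borel_measurable PX"
    by measurable
  moreover have "cond_mgf K X t x = enn2real (\<integral>\<^sup>+y. ennreal (exp (t * X (x, y))) \<partial>K x)"
    if "x \<in> space PX" for x
    unfolding cond_mgf_def using measurable_X_section[OF that] by (intro integral_eq_nn_integral) auto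
  ultimately show ?thesis
    using measurable_cong[of PX "cond_mgf K X t"] by simp
qed

lemma cond_mgf_bounds:
  assumes x: "x \<in> space PX" and "AE y in K x. \<bar>X (x, y)\<bar> \<le> c"
  shows "integrable (K x) (\<lambda>y. exp (t * X (x, y)))"
    and "exp (- (t * c)) \<le> cond_mgf K X t x \<and> cond_mgf K X t x \<le> exp (t * c)"
proof -
  interpret prob_space "K x"
    using K_space[OF x] by simp
  have bounds: "AE y in K x. exp (- (t * c)) \<le> exp (t * X (x, y)) \<and> exp (t * X (x, y)) \<le> exp (t * c)"
    using assms(2) by eventually_elim (intro exp_mult_bounds t)
  then show int: "integrable (K x) (\<lambda>y. exp (t * X (x, y)))"
    using measurable_X_section[OF x] by (intro integrable_real_bounded) auto
  show "exp (- (t * c)) \<le> cond_mgf K X t x \<and> cond_mgf K X t x \<le> exp (t * c)"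
    using bounds unfolding cond_mgf_def
    by (intro conjI integral_ge_const integral_le_const int) (auto elim: eventually_mono)
qed

lemma AE_cond_mgf_bounds:
  "AE x in PX. exp (- (t * c)) \<le> cond_mgf K X t x \<and> cond_mgf K X t x \<le> exp (t * c)"
  using AE_X_section_bound AE_space by eventually_elim (rule cond_mgf_bounds)

lemma integral_cond_mgf: "(\<integral>x. cond_mgf K X t x \<partial>PX) = (\<integral>z. exp (t * X z) \<partial>D)"
proof -
  interpret PX: prob_space PX by (fact prob_space_PX)
  interpret D: prob_space D by (fact prob_space_data_dist)
  have "integrable PX (cond_mgf K X t)"
    by (rule PX.integrable_real_bounded[OF measurable_cond_mgf AE_cond_mgf_bounds])
  then have "ennreal (\<integral>x. cond_mgf K X t x \<partial>PX) = (\<integral>\<^sup>+x. ennreal (cond_mgf K X t x) \<partial>PX)"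
    by (rule nn_integral_eq_integral[symmetric]) (auto simp: cond_mgf_def)
  also have "\<dots> = (\<integral>\<^sup>+x. \<integral>\<^sup>+y. ennreal (exp (t * X (x, y))) \<partial>K x \<partial>PX)"
  proof (rule nn_integral_cong_AE)
    show "AE x in PX. ennreal (cond_mgf K X t x) = (\<integral>\<^sup>+y. ennreal (exp (t * X (x, y))) \<partial>K x)"
      using AE_X_section_bound AE_space
      by eventually_elim (auto simp: cond_mgf_def intro!: nn_integral_eq_integral[symmetric] cond_mgf_bounds)
  qed
  also have "\<dots> = (\<integral>\<^sup>+z. ennreal (exp (t * X z)) \<partial>D)"
    using X_meas by (simp add: nn_integral_data_dist)
  also have "\<dots> = ennreal (\<integral>z. exp (t * X z) \<partial>D)"
  proof (intro nn_integral_eq_integral D.integrable_real_bounded)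
    have "X \<in> borel_measurable D"
      using X_meas sets_data_dist by (simp cong: measurable_cong_sets)
    then show "(\<lambda>z. exp (t * X z)) \<in> borel_measurable D"
      by measurable
    show "AE z in D. exp (- (t * c)) \<le> exp (t * X z) \<and> exp (t * X z) \<le> exp (t * c)"
      using X_bound by eventually_elim (intro exp_mult_bounds t)
  qed auto
  finally show ?thesis
    by (simp add: cond_mgf_def)
qed

lemma AE_nn_integral_exp_section_le:
  "AE x in PX. \<forall>v. 0 \<le> v \<and> v \<le> 1 \<longrightarrow>
     (\<integral>\<^sup>+y. ennreal (exp (t * v * X (x, y))) \<partial>K x) \<le> ennreal (cond_mgf K X t x powr v)"
  using AE_X_section_bound AE_space
proof eventually_elim
  case (elim x)
  interpret prob_space "K x"
    using K_space[OF elim(2)] by simp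
  show ?case
    using measurable_X_section[OF elim(2)] elim(1) t
    by (auto simp: cond_mgf_def intro!: nn_integral_exp_mult_le_powr)
qed

lemma nn_integral_exp_weighted_sum_le:
  assumes w: "feasible_weighting k n e w" and w_le_1: "\<And>i. i < n \<Longrightarrow> w i \<le> 1"
    and G_meas: "G \<in> borel_measurable PX" and G_bound: "\<And>x. a \<le> G x \<and> G x \<le> b" and a: "0 < a"
    and G_dominates: "AE x in PX. \<forall>v. 0 \<le> v \<and> v \<le> 1 \<longrightarrow>
      (\<integral>\<^sup>+y. ennreal (exp (t * v * X (x, y))) \<partial>K x) \<le> ennreal (G x powr v)"
  shows "(\<integral>\<^sup>+\<omega>. ennreal (exp (t * (\<Sum>i<n. w i * X (feat (fst \<omega>) i, snd \<omega> i)))) \<partial>NS)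
       \<le> ennreal ((\<integral>x. G x \<partial>PX) powr (\<Sum>i<n. w i))"
proof -
  interpret \<Phi>: prob_space \<Phi> by (fact prob_space_\<Phi>)
  have w_nonneg: "0 \<le> w i" if "i < n" for i
    using w that unfolding feasible_weighting_def by auto
  have "AE \<phi> in \<Phi>. \<forall>i<n. \<forall>v. 0 \<le> v \<and> v \<le> 1 \<longrightarrow>
      (\<integral>\<^sup>+y. ennreal (exp (t * v * X (feat \<phi> i, y))) \<partial>K (feat \<phi> i)) \<le> ennreal (G (feat \<phi> i) powr v)"
    using G_dominates by (rule AE_feat)
  then have edge_le: "AE \<phi> in \<Phi>. \<forall>i<n.
      (\<integral>\<^sup>+y. ennreal (exp (t * w i * X (feat \<phi> i, y))) \<partial>K (feat \<phi> i)) \<le> ennreal (G (feat \<phi> i) powr w i)"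
    by eventually_elim (use w_nonneg w_le_1 in blast)
  have "ennreal (exp (t * (\<Sum>i<n. w i * X (feat (fst \<omega>) i, snd \<omega> i))))
      = (\<Prod>i<n. ennreal (exp (t * w i * X (feat (fst \<omega>) i, snd \<omega> i))))" for \<omega>
    by (simp add: sum_distrib_left exp_sum mult.assoc prod_ennreal)
  then have "(\<integral>\<^sup>+\<omega>. ennreal (exp (t * (\<Sum>i<n. w i * X (feat (fst \<omega>) i, snd \<omega> i)))) \<partial>NS)
      = (\<integral>\<^sup>+\<omega>. (\<Prod>i<n. ennreal (exp (t * w i * X (feat (fst \<omega>) i, snd \<omega> i)))) \<partial>NS)"
    by simp
  also have "\<dots> = (\<integral>\<^sup>+\<phi>. (\<Prod>i<n. \<integral>\<^sup>+y. ennreal (exp (t * w i * X (feat \<phi> i, y))) \<partial>K (feat \<phi> i)) \<partial>\<Phi>)"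
    by (rule nn_integral_networked_sample_prod[where f="\<lambda>i z. ennreal (exp (t * w i * X z))"])
       (use X_meas in measurable)
  also have "\<dots> \<le> (\<integral>\<^sup>+\<phi>. ennreal (\<Prod>i<n. G (feat \<phi> i) powr w i) \<partial>\<Phi>)"
    using edge_le by (intro nn_integral_mono_AE)
      (auto elim!: eventually_mono simp: prod_ennreal[symmetric] intro!: prod_mono_ennreal)
  also have "\<dots> = ennreal (\<integral>\<phi>. (\<Prod>i<n. G (feat \<phi> i) powr w i) \<partial>\<Phi>)"
    using G_meas G_bound a w_nonneg
    by (intro nn_integral_eq_integral AE_I2 \<Phi>.integrable_real_bounded[where a=0 and b="\<Prod>i<n. b powr w i"]
          prod_powr_bounds borel_measurable_prod powr_real_measurable measurable_compose[OF measurable_feat])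
       (auto intro: prod_nonneg less_imp_le)
  also have "\<dots> \<le> ennreal ((\<integral>x. G x \<partial>PX) powr (\<Sum>i<n. w i))"
    using G_meas G_bound a w by (intro ennreal_leI integral_prod_powr_feat_le) auto
  finally show ?thesis .
qed

lemma networked_mgf_le:
  assumes w: "feasible_weighting k n e w" and w_le_1: "\<And>i. i < n \<Longrightarrow> w i \<le> 1"
  shows "(\<integral>\<^sup>+\<omega>. ennreal (exp (t * (\<Sum>i<n. w i * X (feat (fst \<omega>) i, snd \<omega> i)))) \<partial>NS)
       \<le> ennreal ((\<integral>z. exp (t * X z) \<partial>D) powr (\<Sum>i<n. w i))"
proof -
  \<comment> \<open>clamping the conditional mgf, which changes it only on a null set, gives the pointwise
      bounds needed for Finner's inequality\<close>
  define G where "G x = max (exp (- (t * c))) (min (exp (t * c)) (cond_mgf K X t x))" for x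
  have G_meas: "G \<in> borel_measurable PX"
    unfolding G_def using measurable_cond_mgf by measurable
  have G_bound: "exp (- (t * c)) \<le> G x \<and> G x \<le> exp (t * c)" for x
    using t prob_space.AE_abs_le_nonneg[OF prob_space_data_dist X_bound] unfolding G_def by auto
  have G_eq: "AE x in PX. G x = cond_mgf K X t x"
    using AE_cond_mgf_bounds by eventually_elim (auto simp: G_def)
  have "AE x in PX. \<forall>v. 0 \<le> v \<and> v \<le> 1 \<longrightarrow>
      (\<integral>\<^sup>+y. ennreal (exp (t * v * X (x, y))) \<partial>K x) \<le> ennreal (G x powr v)"
    using AE_nn_integral_exp_section_le G_eq by eventually_elim simp
  then have "(\<integral>\<^sup>+\<omega>. ennreal (exp (t * (\<Sum>i<n. w i * X (feat (fst \<omega>) i, snd \<omega> i)))) \<partial>NS)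
      \<le> ennreal ((\<integral>x. G x \<partial>PX) powr (\<Sum>i<n. w i))"
    using w w_le_1 G_meas G_bound by (intro nn_integral_exp_weighted_sum_le) auto
  also have "(\<integral>x. G x \<partial>PX) = (\<integral>x. cond_mgf K X t x \<partial>PX)"
    using G_eq G_meas measurable_cond_mgf by (intro integral_cong_AE) auto
  finally show ?thesis
    by (simp add: integral_cond_mgf)
qed

end

end

section \<open>The tail bound\<close>

lemma Bernstein_exponent_at_minimiser:
  fixes Q M \<epsilon> :: real
  assumes Q: "0 < Q" and M: "0 \<le> M" and \<epsilon>: "0 < \<epsilon>"
  defines "t \<equiv> \<epsilon> / (Q + M * \<epsilon> / 3)"
  shows "0 < t" and "t * M < 3"
    and "- t * \<epsilon> + t\<^sup>2 * Q / (2 * (1 - t * M / 3)) = - (\<epsilon>\<^sup>2 / (2 * (Q + M * \<epsilon> / 3)))"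
proof -
  define R where "R = Q + M * \<epsilon> / 3"
  have R: "0 < R"
    unfolding R_def using Q M \<epsilon> by (simp add: add_pos_nonneg)
  show "0 < t"
    using \<epsilon> R by (simp add: t_def R_def[symmetric])
  have den: "1 - t * M / 3 = Q / R"
    using R by (simp add: t_def R_def field_simps)
  moreover have "0 < Q / R"
    using Q R by simp
  ultimately show "t * M < 3"
    by linarith
  have "t\<^sup>2 * Q / (2 * (1 - t * M / 3)) = t\<^sup>2 * R / 2"
    unfolding den using Q R by (simp add: field_simps)
  also have "\<dots> = (\<epsilon>\<^sup>2 / R) / 2"
    using R by (simp add: t_def R_def[symmetric] field_simps power2_eq_square)
  finally have quadratic: "t\<^sup>2 * Q / (2 * (1 - t * M / 3)) = (\<epsilon>\<^sup>2 / R) / 2" .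
  have linear: "- t * \<epsilon> = - (\<epsilon>\<^sup>2 / R)"
    by (simp add: t_def R_def[symmetric] power2_eq_square)
  have "- t * \<epsilon> + t\<^sup>2 * Q / (2 * (1 - t * M / 3)) = - ((\<epsilon>\<^sup>2 / R) / 2)"
    unfolding quadratic linear by (simp add: field_simps)
  then show "- t * \<epsilon> + t\<^sup>2 * Q / (2 * (1 - t * M / 3)) = - (\<epsilon>\<^sup>2 / (2 * (Q + M * \<epsilon> / 3)))"
    by (simp add: R_def)
qed

lemma Bernstein_exponent_bound:
  fixes Q M \<epsilon> :: real
  assumes Q: "0 \<le> Q" and M: "0 \<le> M" and \<epsilon>: "0 < \<epsilon>"
  obtains t where "0 < t" "t * M < 3"
    "- t * \<epsilon> + t\<^sup>2 * Q / (2 * (1 - t * M / 3)) \<le> - (\<epsilon>\<^sup>2 / (2 * (Q + M * \<epsilon> / 3)))"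
proof (cases "Q > 0")
  case True
  then show ?thesis
    using Bernstein_exponent_at_minimiser[OF True M \<epsilon>] that by simp
next
  case False
  then have Q0: "Q = 0"
    using Q by simp
  show ?thesis
  proof (cases "M = 0")
    case True
    then show ?thesis
      using that[of 1] Q0 \<epsilon> by simp
  next
    case False
    then have "0 < M"
      using M by simp
    \<comment> \<open>without variance the exponent is linear in t, and t = 3 / (2 M) attains the bound\<close>
    have eq: "\<epsilon>\<^sup>2 / (2 * (Q + M * \<epsilon> / 3)) = 3 / (2 * M) * \<epsilon>"
      using Q0 \<open>0 < M\<close> \<epsilon> by (simp add: power2_eq_square)
    show ?thesis
    proof (rule that)
      show "0 < 3 / (2 * M)" and "3 / (2 * M) * M < 3"
        using \<open>0 < M\<close> by auto
      show "- (3 / (2 * M)) * \<epsilon> + (3 / (2 * M))\<^sup>2 * Q / (2 * (1 - 3 / (2 * M) * M / 3))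
          \<le> - (\<epsilon>\<^sup>2 / (2 * (Q + M * \<epsilon> / 3)))"
        unfolding eq by (simp only: Q0 mult_zero_right div_0)
    qed
  qed
qed

lemma feasible_weighting_le_1:
  assumes "feasible_weighting k n e w" and "k \<ge> 1" and "i < n"
  shows "w i \<le> 1"
proof -
  have nonneg: "\<forall>i<n. 0 \<le> w i"
    and vertex: "\<And>j a. j < k \<Longrightarrow> (\<Sum>i | i < n \<and> e i j = a. w i) \<le> 1"
    using assms(1) unfolding feasible_weighting_def by auto
  have "w i \<le> (\<Sum>i' | i' < n \<and> e i' 0 = e i 0. w i')"
    using nonneg assms(3) by (intro member_le_sum) auto
  also have "\<dots> \<le> 1"
    using vertex[of 0 "e i 0"] assms(2) by simp
  finally show ?thesis .
qed

lemma (in prob_space) prob_ge_le_exp_mgf: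
  fixes f :: "'a \<Rightarrow> real"
  assumes "f \<in> borel_measurable M" and "0 < t" and "0 \<le> B"
    and "(\<integral>\<^sup>+x. ennreal (exp (t * f x)) \<partial>M) \<le> ennreal B"
  shows "prob {x \<in> space M. a \<le> f x} \<le> exp (- t * a) * B"
proof -
  have "emeasure M {x \<in> space M. a \<le> f x}
      \<le> ennreal (exp (- t * a)) * (\<integral>\<^sup>+x. ennreal (exp (t * f x)) * indicator (space M) x \<partial>M)"
    using assms(1,2) by (intro Chernoff_ineq_nn_integral_ge) auto
  also have "(\<integral>\<^sup>+x. ennreal (exp (t * f x)) * indicator (space M) x \<partial>M) = (\<integral>\<^sup>+x. ennreal (exp (t * f x)) \<partial>M)"
    by (intro nn_integral_cong) simp
  also have "ennreal (exp (- t * a)) * \<dots> \<le> ennreal (exp (- t * a)) * ennreal B"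
    using assms(4) by (rule mult_left_mono) simp
  finally have "ennreal (prob {x \<in> space M. a \<le> f x}) \<le> ennreal (exp (- t * a) * B)"
    using assms(3) by (simp add: emeasure_eq_measure ennreal_mult)
  then show ?thesis
    using assms(3) by (simp add: ennreal_le_iff)
qed

lemma (in networked_model) networked_mgf_Bernstein:
  fixes \<xi> :: "(nat \<Rightarrow> 'x) \<times> real \<Rightarrow> real"
  assumes \<xi>_meas: "\<xi> \<in> borel_measurable (PX \<Otimes>\<^sub>M borel)" and \<mu>: "\<mu> = (\<integral>z. \<xi> z \<partial>D)"
    and \<xi>_bound: "AE z in D. \<bar>\<xi> z - \<mu>\<bar> \<le> c"
    and w: "feasible_weighting k n e w" and w_le_1: "\<And>i. i < n \<Longrightarrow> w i \<le> 1"
    and t: "0 \<le> t" "t * c < 3"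
  shows "(\<integral>\<^sup>+\<omega>. ennreal (exp (t * (\<Sum>i<n. w i * (\<xi> (feat (fst \<omega>) i, snd \<omega> i) - \<mu>)))) \<partial>NS)
    \<le> ennreal (exp ((\<Sum>i<n. w i) * (t\<^sup>2 * (\<integral>z. (\<xi> z - \<mu>)\<^sup>2 \<partial>D) / (2 * (1 - t * c / 3)))))"
proof -
  interpret D: prob_space D by (fact prob_space_data_dist)
  define s where "s = (\<Sum>i<n. w i)"
  define q where "q = t\<^sup>2 * (\<integral>z. (\<xi> z - \<mu>)\<^sup>2 \<partial>D) / (2 * (1 - t * c / 3))"
  define m where "m = (\<integral>z. exp (t * (\<xi> z - \<mu>)) \<partial>D)"
  have "m \<le> 1 + q"
    unfolding m_def q_def using \<xi>_meas sets_data_dist \<xi>_bound \<mu> t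
    by (intro D.Bernstein_mgf_le) (auto cong: measurable_cong_sets)
  also have "\<dots> \<le> exp q"
    by (rule exp_ge_add_one_self)
  finally have "m powr s \<le> exp q powr s"
    using w unfolding s_def feasible_weighting_def by (intro powr_mono2 sum_nonneg) (auto simp: m_def)
  then have "m powr s \<le> exp (s * q)"
    by (simp add: powr_def)
  moreover have "(\<integral>\<^sup>+\<omega>. ennreal (exp (t * (\<Sum>i<n. w i * (\<xi> (feat (fst \<omega>) i, snd \<omega> i) - \<mu>)))) \<partial>NS)
      \<le> ennreal (m powr s)"
    unfolding m_def s_def using \<xi>_meas \<xi>_bound t w w_le_1
    by (intro networked_mgf_le[where X="\<lambda>z. \<xi> z - \<mu>"]) auto
  ultimately show ?thesis
    unfolding s_def q_def by (blast intro: order_trans ennreal_leI)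
qed

lemma (in networked_model) networked_tail_le:
  fixes \<xi> :: "(nat \<Rightarrow> 'x) \<times> real \<Rightarrow> real"
  assumes \<xi>_meas: "\<xi> \<in> borel_measurable (PX \<Otimes>\<^sub>M borel)" and \<mu>: "\<mu> = (\<integral>z. \<xi> z \<partial>D)"
    and \<xi>_bound: "AE z in D. \<bar>\<xi> z - \<mu>\<bar> \<le> c"
    and w: "feasible_weighting k n e w" and w_le_1: "\<And>i. i < n \<Longrightarrow> w i \<le> 1"
    and t: "0 < t" "t * c < 3"
  shows "measure NS {\<omega> \<in> space NS. \<epsilon> \<le> (\<Sum>i<n. w i * (\<xi> (feat (fst \<omega>) i, snd \<omega> i) - \<mu>))}
    \<le> exp (- t * \<epsilon> + t\<^sup>2 * ((\<Sum>i<n. w i) * (\<integral>z. (\<xi> z - \<mu>)\<^sup>2 \<partial>D)) / (2 * (1 - t * c / 3)))"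
proof -
  interpret NS: prob_space NS by (fact prob_space_networked_sample)
  have "measure NS {\<omega> \<in> space NS. \<epsilon> \<le> (\<Sum>i<n. w i * (\<xi> (feat (fst \<omega>) i, snd \<omega> i) - \<mu>))}
      \<le> exp (- t * \<epsilon>) * exp ((\<Sum>i<n. w i) * (t\<^sup>2 * (\<integral>z. (\<xi> z - \<mu>)\<^sup>2 \<partial>D) / (2 * (1 - t * c / 3))))"
  proof (rule NS.prob_ge_le_exp_mgf)
    have "(\<lambda>ys. ys i) \<in> Y \<rightarrow>\<^sub>M borel" if "i < n" for i
      using that by (intro measurable_component_singleton) auto
    then show "(\<lambda>\<omega>. \<Sum>i<n. w i * (\<xi> (feat (fst \<omega>) i, snd \<omega> i) - \<mu>)) \<in> borel_measurable NS"
      using sets_networked_sample \<xi>_meas measurable_feat by (simp cong: measurable_cong_sets) measurable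
  qed (use networked_mgf_Bernstein[OF \<xi>_meas \<mu> \<xi>_bound w w_le_1] t in auto)
  then show ?thesis
    by (simp add: exp_add[symmetric] mult.left_commute)
qed

theorem lemma3:
  fixes k n :: nat and e :: "nat \<Rightarrow> nat \<Rightarrow> 'v"
    and \<rho> :: "nat \<Rightarrow> 'x measure" and K :: "(nat \<Rightarrow> 'x) \<Rightarrow> real measure"
    and \<xi> :: "(nat \<Rightarrow> 'x) \<times> real \<Rightarrow> real"
    and w :: "nat \<Rightarrow> real" and \<mu> \<sigma> M \<epsilon> :: real
  assumes "k \<ge> 1"
    and "\<And>j. j < k \<Longrightarrow> prob_space (\<rho> j)"
    and "K \<in> measurable (PiM {..<k} \<rho>) (prob_algebra borel)"
    and "\<xi> \<in> borel_measurable (PiM {..<k} \<rho> \<Otimes>\<^sub>M borel)"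
    and "\<mu> = (\<integral>z. \<xi> z \<partial>data_dist k \<rho> K)"
    and "\<sigma>\<^sup>2 = (\<integral>z. (\<xi> z - \<mu>)\<^sup>2 \<partial>data_dist k \<rho> K)"
    and "AE z in data_dist k \<rho> K. \<bar>\<xi> z - \<mu>\<bar> \<le> M"
    and "optimal_weighting k n e w"
    and "\<epsilon> > 0"
  shows "measure (networked_sample k n e \<rho> K)
           {\<omega> \<in> space (networked_sample k n e \<rho> K).
              (\<Sum>i<n. w i * (\<xi> (edge_feat k e (fst \<omega>) i, snd \<omega> i) - \<mu>)) \<ge> \<epsilon>}
         \<le> exp (- (\<epsilon>\<^sup>2 / (2 * (s_value k n e * \<sigma>\<^sup>2 + M * \<epsilon> / 3))))"
proof -
  interpret networked_model k n e \<rho> K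
    using assms(2,3) by (rule networked_model.intro)
  have w: "feasible_weighting k n e w" and s: "s_value k n e = (\<Sum>i<n. w i)"
    using assms(8) unfolding optimal_weighting_def by auto
  have "0 \<le> s_value k n e"
    using w unfolding s feasible_weighting_def by (auto intro: sum_nonneg)
  then have "0 \<le> s_value k n e * \<sigma>\<^sup>2"
    by simp
  moreover have "0 \<le> M"
    using prob_space.AE_abs_le_nonneg[OF prob_space_data_dist assms(7)] .
  ultimately obtain t where t: "0 < t" "t * M < 3" and exponent:
    "- t * \<epsilon> + t\<^sup>2 * (s_value k n e * \<sigma>\<^sup>2) / (2 * (1 - t * M / 3))
       \<le> - (\<epsilon>\<^sup>2 / (2 * (s_value k n e * \<sigma>\<^sup>2 + M * \<epsilon> / 3)))"
    using Bernstein_exponent_bound assms(9) by blast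
  have "measure (networked_sample k n e \<rho> K)
           {\<omega> \<in> space (networked_sample k n e \<rho> K).
              \<epsilon> \<le> (\<Sum>i<n. w i * (\<xi> (edge_feat k e (fst \<omega>) i, snd \<omega> i) - \<mu>))}
         \<le> exp (- t * \<epsilon> + t\<^sup>2 * (s_value k n e * \<sigma>\<^sup>2) / (2 * (1 - t * M / 3)))"
    using networked_tail_le[OF assms(4,5,7) w feasible_weighting_le_1[OF w assms(1)] t]
    by (simp add: s assms(6))
  also have "\<dots> \<le> exp (- (\<epsilon>\<^sup>2 / (2 * (s_value k n e * \<sigma>\<^sup>2 + M * \<epsilon> / 3))))"
    using exponent by simp
  finally show ?thesis by simp
qed

end
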